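(* Let $0<k<n$ and $d$ be integers, and let $A_c=(\alpha_c,n_1,d_1,k_1,n_2,d_2,k_2)$ be an allowable critical data set for type $(n,d,k)$ with $k_2=0$. Then $C_{12}>0$ and $C_{21}>0$.
   Context: Write $d=na-t$ with integers $a,t$, $0\le t<n$, and $ka=l(n-k)+t+m$ with integers $l,m$, $0\le m<n-k$. A critical data set for type $(n,d,k)$ is a tuple $A_c=(\alpha_c,n_1,d_1,k_1,n_2,d_2,k_2)$ with integers $n_i\ge1$, $k_i\ge0$, $d_i$ such that $n_1+n_2=n$, $d_1+d_2=d$, $k_1+k_2=k$, $\frac{d_2}{n_2}>\frac{d_1}{n_1}$, $\frac{k_1}{n_1}>\frac{k_2}{n_2}$, and $\alpha_c=\frac{d_2n_1-d_1n_2}{n_2k_1-n_1k_2}$. It is allowable if moreover $\frac tk<\alpha_c<\frac{ln+t}{k}$, $d\ge\frac1k(n^2-1)-(n-k)$, $d_1\ge\frac1{k_1}(n_1^2-1)-(n_1-k_1)$, and either ($k_2=0$ and $n_2=1$) or ($k_2\ge1$ and $d_2\ge\frac1{k_2}(n_2^2-1)-(n_2-k_2)$). Define $C_{12}=-n_1n_2-d_2n_1+d_1n_2+k_1(d_2+n_2-k_2)$ and $C_{21}=-n_1n_2+d_2n_1-d_1n_2+k_2(d_1+n_1-k_1)$. *)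

theory Defs
  imports Complex_Main
begin

definition critical_data_set ::
  "int \<Rightarrow> int \<Rightarrow> int \<Rightarrow> real \<Rightarrow> int \<Rightarrow> int \<Rightarrow> int \<Rightarrow> int \<Rightarrow> int \<Rightarrow> int \<Rightarrow> bool" where
  "critical_data_set n d k \<alpha> n1 d1 k1 n2 d2 k2 \<longleftrightarrow>
     n1 \<ge> 1 \<and> n2 \<ge> 1 \<and> k1 \<ge> 0 \<and> k2 \<ge> 0 \<and>
     n1 + n2 = n \<and> d1 + d2 = d \<and> k1 + k2 = k \<and>
     real_of_int d2 / real_of_int n2 > real_of_int d1 / real_of_int n1 \<and>
     real_of_int k1 / real_of_int n1 > real_of_int k2 / real_of_int n2 \<and>
     \<alpha> = real_of_int (d2 * n1 - d1 * n2) / real_of_int (n2 * k1 - n1 * k2)"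

text \<open>Allowable critical data set; t and l are the integers attached to (n,d,k)
  by d = n a - t (0 <= t < n) and k a = l (n-k) + t + m (0 <= m < n-k).\<close>
definition allowable ::
  "int \<Rightarrow> int \<Rightarrow> int \<Rightarrow> int \<Rightarrow> int \<Rightarrow> real \<Rightarrow> int \<Rightarrow> int \<Rightarrow> int \<Rightarrow> int \<Rightarrow> int \<Rightarrow> int \<Rightarrow> bool" where
  "allowable n d k t l \<alpha> n1 d1 k1 n2 d2 k2 \<longleftrightarrow>
     critical_data_set n d k \<alpha> n1 d1 k1 n2 d2 k2 \<and>
     real_of_int t / real_of_int k < \<alpha> \<and>
     \<alpha> < real_of_int (l * n + t) / real_of_int k \<and>
     real_of_int d \<ge> (real_of_int n ^ 2 - 1) / real_of_int k - real_of_int (n - k) \<and>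
     real_of_int d1 \<ge> (real_of_int n1 ^ 2 - 1) / real_of_int k1 - real_of_int (n1 - k1) \<and>
     ((k2 = 0 \<and> n2 = 1) \<or>
      (k2 \<ge> 1 \<and> real_of_int d2 \<ge> (real_of_int n2 ^ 2 - 1) / real_of_int k2 - real_of_int (n2 - k2)))"

definition C12 :: "int \<Rightarrow> int \<Rightarrow> int \<Rightarrow> int \<Rightarrow> int \<Rightarrow> int \<Rightarrow> int" where
  "C12 n1 d1 k1 n2 d2 k2 = - n1 * n2 - d2 * n1 + d1 * n2 + k1 * (d2 + n2 - k2)"

definition C21 :: "int \<Rightarrow> int \<Rightarrow> int \<Rightarrow> int \<Rightarrow> int \<Rightarrow> int \<Rightarrow> int" where
  "C21 n1 d1 k1 n2 d2 k2 = - n1 * n2 + d2 * n1 - d1 * n2 + k2 * (d1 + n1 - k1)"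

end

theory Submission
  imports Defs
begin

text \<open>If \<open>k\<^sub>2 = 0\<close> then allowability forces \<open>n\<^sub>2 = 1\<close>, so \<open>k\<^sub>1 = k\<close>, \<open>n\<^sub>1 = n - 1\<close> and
  \<open>\<alpha>\<^sub>c = (n d\<^sub>2 - d)/k = (n j + t)/k\<close> with \<open>j = d\<^sub>2 - a\<close>. The window \<open>t/k < \<alpha>\<^sub>c < (l n + t)/k\<close>
  then pins \<open>1 \<le> j \<le> l - 1\<close>, and the two constants become
  \<open>C\<^sub>2\<^sub>1 = n (j - 1) + t + 1\<close> and \<open>C\<^sub>1\<^sub>2 = (n - k)(l - 1 - j) + m + 1\<close>.\<close>

lemma critical_data_set_k2_zero:
  assumes "critical_data_set n d k \<alpha> n1 d1 k1 1 d2 0"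
  shows "n1 = n - 1" "d1 = d - d2" "k1 = k"
    and "\<alpha> = of_int (n * d2 - d) / of_int k"
proof -
  show n1: "n1 = n - 1" and d1: "d1 = d - d2" and k1: "k1 = k"
    using assms unfolding critical_data_set_def by auto
  have "\<alpha> = of_int (d2 * n1 - d1) / of_int k1"
    using assms unfolding critical_data_set_def by simp
  also have "d2 * n1 - d1 = n * d2 - d"
    unfolding n1 d1 by (simp add: algebra_simps)
  finally show "\<alpha> = of_int (n * d2 - d) / of_int k"
    using k1 by simp
qed

lemma C21_k2_zero: "C21 (n - 1) (d - d2) k 1 d2 0 = (n * d2 - d) - (n - 1)"
  by (simp add: C21_def algebra_simps)

lemma C12_k2_zero: "C12 (n - 1) (d - d2) k 1 d2 0 = k * (d2 + 1) - (n * d2 - d) - (n - 1)"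
  by (simp add: C12_def algebra_simps)

lemma multiplier_strictly_between:
  fixes n j l :: int
  assumes "0 < n" and "0 < n * j" and "n * j < n * l"
  shows "1 \<le> j" and "j \<le> l - 1"
  using assms by (simp_all add: zero_less_mult_iff)

theorem proposition5p1:
  fixes n d k a t l m n1 d1 k1 n2 d2 k2 :: int and \<alpha> :: real
  assumes "0 < k" and "k < n"
    and "d = n * a - t" and "0 \<le> t" and "t < n"
    and "k * a = l * (n - k) + t + m" and "0 \<le> m" and "m < n - k"
    and "allowable n d k t l \<alpha> n1 d1 k1 n2 d2 k2"
    and "k2 = 0"
  shows "C12 n1 d1 k1 n2 d2 k2 > 0 \<and> C21 n1 d1 k1 n2 d2 k2 > 0"
proof -
  have n2: "n2 = 1" and crit: "critical_data_set n d k \<alpha> n1 d1 k1 1 d2 0"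
    and window: "of_int t / of_int k < \<alpha>" "\<alpha> < of_int (l * n + t) / of_int k"
    using assms(9,10) unfolding allowable_def by auto
  note split = critical_data_set_k2_zero[OF crit]
  define j where "j = d2 - a"
  have slope: "n * d2 - d = n * j + t"
    using assms(3) by (simp add: j_def algebra_simps)
  have "t < n * j + t" "n * j + t < l * n + t"
    using window split(4) slope assms(1) by (simp_all add: divide_less_cancel flip: of_int_mult)
  then have j: "1 \<le> j" "j \<le> l - 1"
    using multiplier_strictly_between[of n j l] assms(1,2) by (simp_all add: mult.commute)
  have "C21 n1 d1 k1 n2 d2 k2 = n * (j - 1) + t + 1"
    unfolding split(1-3) n2 assms(10) C21_k2_zero slope by (simp add: algebra_simps)
  moreover have "C12 n1 d1 k1 n2 d2 k2 = (n - k) * (l - 1 - j) + m + 1"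
    unfolding split(1-3) n2 assms(10) C12_k2_zero slope
    using assms(6) by (simp add: j_def algebra_simps)
  ultimately show ?thesis
    using j assms(1,2,4,7) by simp
qed

end
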